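(* Let $k$ be a positive integer and let $(U,V,E)$ be a finite bipartite graph with parts $U,V$, $|U|=m$ and $|V|=n$. Let $\mathcal{P}$ be a partition of $V$ in which every part has size at most $\frac{n}{2k}$, and suppose each vertex $u\in U$ has neighbours in fewer than $k$ parts of $\mathcal{P}$. Then there exist $A\subseteq U$ and $B\subseteq V$ with $|A|\ge \frac{m}{k}$ and $|B|\ge\frac{n}{2k}$ such that there is no edge between $A$ and $B$. *)

theory Defs
  imports Main "HOL-Library.Disjoint_Sets" Complex_Main
begin

end

theory Submission
  imports Defs
begin

text \<open>Let \<open>s = n/(2k)\<close>. Every part of \<open>\<P>\<close> has size at most \<open>s\<close> and the parts have total size
\<open>2ks\<close>, so one can greedily cut out \<open>k\<close> disjoint groups of parts, each covering between \<open>s\<close> and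
\<open>2s\<close> vertices of \<open>V\<close>; at least \<open>2(k-1)s\<close> vertices then remain for the later groups.
A vertex \<open>u \<in> U\<close> meets fewer than \<open>k\<close> parts, hence fewer than \<open>k\<close> groups, so it has no
neighbour in some group. By pigeonhole, one group is avoided by at least \<open>m/k\<close> vertices of \<open>U\<close>;
take these as \<open>A\<close> and the union of the group as \<open>B\<close>.\<close>

lemma exists_subset_with_sum_between:
  fixes w :: "'c \<Rightarrow> real"
  assumes "finite Q" and "0 \<le> s" and "\<forall>x\<in>Q. 0 \<le> w x \<and> w x \<le> s" and "s \<le> sum w Q"
  shows "\<exists>R\<subseteq>Q. s \<le> sum w R \<and> sum w R \<le> 2 * s"
  using assms
proof (induction Q rule: finite_induct)
  case empty
  then show ?case by auto
next
  case (insert x F)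
  show ?case
  proof (cases "s \<le> sum w F")
    case True
    with insert show ?thesis by blast
  next
    case False
    then have "sum w (insert x F) \<le> 2 * s" using insert by simp
    with insert.prems show ?thesis by blast
  qed
qed

lemma exists_disjoint_subsets_with_large_sums:
  fixes w :: "'c \<Rightarrow> real"
  assumes "finite Q" and "0 \<le> s" and "\<forall>x\<in>Q. 0 \<le> w x \<and> w x \<le> s"
    and "2 * real j * s \<le> sum w Q"
  shows "\<exists>G. disjoint_family_on G {..<j} \<and> (\<forall>i<j. G i \<subseteq> Q \<and> s \<le> sum w (G i))"
  using assms
proof (induction j arbitrary: Q)
  case 0
  then show ?case by (auto simp: disjoint_family_on_def)
next
  case (Suc j)
  have "2 * real (Suc j) * s = 2 * real j * s + 2 * s"
    by (simp add: algebra_simps)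
  moreover have "0 \<le> real j * s"
    using Suc.prems(2) by simp
  ultimately have "s \<le> sum w Q"
    using Suc.prems(2,4) by linarith
  then obtain R where R: "R \<subseteq> Q" "s \<le> sum w R" "sum w R \<le> 2 * s"
    using exists_subset_with_sum_between[OF Suc.prems(1-3)] by blast
  have "sum w (Q - R) = sum w Q - sum w R"
    using R(1) Suc.prems(1) by (simp add: sum_diff)
  then have "2 * real j * s \<le> sum w (Q - R)"
    using Suc.prems(4) R(3) by (simp add: algebra_simps)
  then obtain G where G: "disjoint_family_on G {..<j}" "\<forall>i<j. G i \<subseteq> Q - R \<and> s \<le> sum w (G i)"
    using Suc.IH[of "Q - R"] Suc.prems(1-3) by blast
  have "disjoint_family_on (G(j := R)) {..<Suc j}"
    unfolding disjoint_family_on_def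
  proof (intro ballI impI)
    fix a b assume "a \<in> {..<Suc j}" "b \<in> {..<Suc j}" "a \<noteq> b"
    then consider "a < j" "b < j" | "a = j" "b < j" | "a < j" "b = j"
      by fastforce
    then show "(G(j := R)) a \<inter> (G(j := R)) b = {}"
    proof cases
      case 1
      with G(1) \<open>a \<noteq> b\<close> show ?thesis by (simp add: disjoint_family_onD)
    next
      case 2
      with G(2) show ?thesis by auto
    next
      case 3
      with G(2) show ?thesis by auto
    qed
  qed
  moreover have "\<forall>i<Suc j. (G(j := R)) i \<subseteq> Q \<and> s \<le> sum w ((G(j := R)) i)"
    using G(2) R by (auto simp: less_Suc_eq)
  ultimately show ?case by blast
qed

lemma card_disjoint_family_meeting_le:
  assumes "disjoint_family_on G I" and "finite S"
  shows "card {i\<in>I. G i \<inter> S \<noteq> {}} \<le> card S"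
proof -
  let ?T = "{i\<in>I. G i \<inter> S \<noteq> {}}"
  have "\<forall>i\<in>?T. \<exists>x. x \<in> G i \<inter> S"
    by blast
  then have "\<exists>f. \<forall>i\<in>?T. f i \<in> G i \<inter> S"
    by (rule bchoice)
  then obtain f where f: "\<forall>i\<in>?T. f i \<in> G i \<inter> S"
    by blast
  have "inj_on f ?T"
  proof (rule inj_onI)
    fix i j assume i: "i \<in> ?T" and j: "j \<in> ?T" and "f i = f j"
    then have "f i \<in> G i \<inter> G j"
      using f by auto
    with i j show "i = j"
      using disjoint_family_onD[OF assms(1)] by blast
  qed
  moreover have "f ` ?T \<subseteq> S"
    using f by blast
  ultimately show ?thesis
    using assms(2) by (rule card_inj_on_le)
qed

lemma exists_disjoint_family_member_avoiding:
  assumes "disjoint_family_on G I" and "finite S" and "card S < card I"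
  shows "\<exists>i\<in>I. G i \<inter> S = {}"
proof -
  have "finite I"
    using assms(3) by (metis card.infinite not_less_zero)
  have "card {i\<in>I. G i \<inter> S \<noteq> {}} < card I"
    using card_disjoint_family_meeting_le[OF assms(1,2)] assms(3) by linarith
  then have "\<not> I \<subseteq> {i\<in>I. G i \<inter> S \<noteq> {}}"
    using card_mono[of "{i\<in>I. G i \<inter> S \<noteq> {}}" I] \<open>finite I\<close> by fastforce
  then show ?thesis
    by blast
qed

lemma exists_large_member_of_cover:
  assumes "finite I" and "I \<noteq> {}" and "\<forall>i\<in>I. finite (M i)" and "U \<subseteq> (\<Union>i\<in>I. M i)"
  shows "\<exists>i\<in>I. real (card U) / real (card I) \<le> real (card (M i))"
proof (rule ccontr)
  assume "\<not> ?thesis"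
  then have "(\<Sum>i\<in>I. real (card (M i))) < (\<Sum>i\<in>I. real (card U) / real (card I))"
    using assms(1,2) by (intro sum_strict_mono) auto
  also have "\<dots> = real (card U)"
    using assms(1,2) by simp
  also have "card U \<le> card (\<Union>i\<in>I. M i)"
    using assms by (intro card_mono) auto
  also have "\<dots> \<le> (\<Sum>i\<in>I. card (M i))"
    using assms(1) by (rule card_UN_le)
  finally show False
    by simp
qed

lemma card_Union_subset_partition:
  assumes "finite V" and "partition_on V P" and "Q \<subseteq> P"
  shows "card (\<Union>Q) = (\<Sum>X\<in>Q. card X)"
proof (rule card_Union_disjoint)
  show "pairwise disjnt Q"
    using pairwise_subset[OF partition_onD2[OF assms(2)] assms(3)] .
  show "finite X" if "X \<in> Q" for X
    using that assms(1,3) partition_onD1[OF assms(2)] by (meson Union_upper finite_subset subsetD)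
qed

lemma exists_disjoint_groups_of_parts:
  assumes "finite V" and "partition_on V P" and "0 \<le> s" and "\<forall>X\<in>P. real (card X) \<le> s"
    and "2 * real k * s \<le> real (card V)"
  shows "\<exists>G. disjoint_family_on G {..<k} \<and> (\<forall>i<k. G i \<subseteq> P \<and> s \<le> real (card (\<Union>(G i))))"
proof -
  have "finite P"
    using assms(1,2) by (rule finite_elements)
  moreover have "card V = (\<Sum>X\<in>P. card X)"
    using card_Union_subset_partition[OF assms(1,2)] partition_onD1[OF assms(2)] by simp
  ultimately obtain G where G: "disjoint_family_on G {..<k}"
      "\<forall>i<k. G i \<subseteq> P \<and> s \<le> (\<Sum>X\<in>G i. real (card X))"
    using exists_disjoint_subsets_with_large_sums[of P s "\<lambda>X. real (card X)" k] assms(3-5) by auto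
  have "real (card (\<Union>(G i))) = (\<Sum>X\<in>G i. real (card X))" if "i < k" for i
    using card_Union_subset_partition[OF assms(1,2), of "G i"] G(2) that by simp
  with G(2) have "\<forall>i<k. G i \<subseteq> P \<and> s \<le> real (card (\<Union>(G i)))"
    by simp
  with G(1) show ?thesis
    by blast
qed

lemma subset_UN_avoiders_of_disjoint_groups:
  assumes "disjoint_family_on G I" and "\<forall>i\<in>I. G i \<subseteq> P" and "finite P"
    and "\<forall>u\<in>U. card {X\<in>P. \<exists>v\<in>X. (u, v) \<in> E} < card I"
  shows "U \<subseteq> (\<Union>i\<in>I. {u\<in>U. \<forall>X\<in>G i. \<forall>v\<in>X. (u, v) \<notin> E})"
proof
  fix u assume "u \<in> U"
  let ?S = "{X\<in>P. \<exists>v\<in>X. (u, v) \<in> E}"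
  have "finite ?S"
    using assms(3) by simp
  moreover have "card ?S < card I"
    using assms(4) \<open>u \<in> U\<close> by blast
  ultimately obtain i where "i \<in> I" "G i \<inter> ?S = {}"
    using exists_disjoint_family_member_avoiding[OF assms(1)] by blast
  moreover have "G i \<subseteq> P"
    using assms(2) \<open>i \<in> I\<close> by blast
  ultimately show "u \<in> (\<Union>i\<in>I. {u\<in>U. \<forall>X\<in>G i. \<forall>v\<in>X. (u, v) \<notin> E})"
    using \<open>u \<in> U\<close> by blast
qed

theorem lemma3p1:
  fixes U :: "'a set" and V :: "'b set" and E :: "('a \<times> 'b) set"
    and P :: "'b set set" and k :: nat
  assumes "k > 0"
    and "finite U" and "finite V"
    and "E \<subseteq> U \<times> V"
    and "partition_on V P"
    and "\<forall>X\<in>P. real (card X) \<le> real (card V) / (2 * real k)"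
    and "\<forall>u\<in>U. card {X\<in>P. \<exists>v\<in>X. (u, v) \<in> E} < k"
  shows "\<exists>A B. A \<subseteq> U \<and> B \<subseteq> V
           \<and> real (card A) \<ge> real (card U) / real k
           \<and> real (card B) \<ge> real (card V) / (2 * real k)
           \<and> (\<forall>a\<in>A. \<forall>b\<in>B. (a, b) \<notin> E)"
proof -
  have "2 * real k * (real (card V) / (2 * real k)) \<le> real (card V)"
    using assms(1) by simp
  then obtain G where G: "disjoint_family_on G {..<k}"
      "\<forall>i<k. G i \<subseteq> P \<and> real (card V) / (2 * real k) \<le> real (card (\<Union>(G i)))"
    using exists_disjoint_groups_of_parts[OF assms(3,5) _ assms(6), where k = k] by auto
  define M where "M i = {u\<in>U. \<forall>X\<in>G i. \<forall>v\<in>X. (u, v) \<notin> E}" for i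
  have "U \<subseteq> (\<Union>i\<in>{..<k}. M i)"
    unfolding M_def
    by (rule subset_UN_avoiders_of_disjoint_groups[OF G(1)])
      (use G(2) finite_elements[OF assms(3,5)] assms(7) in auto)
  then obtain i where i: "i < k" "real (card U) / real k \<le> real (card (M i))"
    using exists_large_member_of_cover[of "{..<k}" M U] assms(1,2) by (auto simp: M_def)
  moreover have "\<Union>(G i) \<subseteq> V" and "real (card V) / (2 * real k) \<le> real (card (\<Union>(G i)))"
    using G(2) i(1) partition_onD1[OF assms(5)] by auto
  moreover have "M i \<subseteq> U" and "\<forall>a\<in>M i. \<forall>b\<in>\<Union>(G i). (a, b) \<notin> E"
    by (auto simp: M_def)
  ultimately show ?thesis
    by blast
qed

end
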